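(* Let $n\ge 0$, let $T$ be a triangulation of a regular polygon with $n+3$ vertices and let $\alpha,\alpha'$ be positive roots. Then $\operatorname{Supp}\alpha\cap\operatorname{Supp}\alpha'$ is connected as a subset of the (underlying graph of the) quiver ${Q}_T$.
   Context: Diagonals of the polygon are called roots; those in $T$ are negative roots, indexed by a set $I$ (the one indexed by $i$ written $-\alpha_i$), and the others positive roots. $\operatorname{Supp}\alpha$ is the set of $i\in I$ with $-\alpha_i$ crossing $\alpha$. The quiver ${Q}_T$ has vertex set $I$, with an arrow between $i$ and $j$ exactly when $-\alpha_i$ and $-\alpha_j$ bound a common triangle of $T$. *)

theory Defs
  imports Main
begin

text \<open>Combinatorial model of a convex (regular) polygon with N vertices labelled
  0, 1, ..., N-1 in cyclic order. Segments are 2-element sets of vertices.\<close>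

definition is_diagonal :: "nat \<Rightarrow> nat set \<Rightarrow> bool" where
  "is_diagonal N d \<longleftrightarrow> (\<exists>a b. d = {a, b} \<and> a < b \<and> b < N \<and> a + 2 \<le> b \<and> \<not> (a = 0 \<and> b = N - 1))"

definition is_edge :: "nat \<Rightarrow> nat set \<Rightarrow> bool" where
  "is_edge N e \<longleftrightarrow> (\<exists>a b. e = {a, b} \<and> a < b \<and> b < N \<and> (b = a + 1 \<or> (a = 0 \<and> b = N - 1)))"

definition crosses :: "nat set \<Rightarrow> nat set \<Rightarrow> bool" where
  "crosses d e \<longleftrightarrow> (\<exists>a b c c'. d = {a, b} \<and> e = {c, c'} \<and> a < c \<and> c < b \<and> (c' < a \<or> b < c'))"

definition is_triangulation :: "nat \<Rightarrow> nat set set \<Rightarrow> bool" where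
  "is_triangulation N T \<longleftrightarrow>
     (\<forall>d\<in>T. is_diagonal N d) \<and>
     (\<forall>d\<in>T. \<forall>e\<in>T. \<not> crosses d e) \<and>
     (\<forall>e. is_diagonal N e \<and> (\<forall>d\<in>T. \<not> crosses d e) \<longrightarrow> e \<in> T)"

text \<open>Roots are diagonals; negative roots are those in T, positive roots the others.
  We index the negative roots by the diagonals of T themselves (I = T).\<close>
definition positive_root :: "nat \<Rightarrow> nat set set \<Rightarrow> nat set \<Rightarrow> bool" where
  "positive_root N T \<alpha> \<longleftrightarrow> is_diagonal N \<alpha> \<and> \<alpha> \<notin> T"

definition Supp :: "nat set set \<Rightarrow> nat set \<Rightarrow> nat set set" where
  "Supp T \<alpha> = {i \<in> T. crosses i \<alpha>}"

definition is_triangle_of :: "nat \<Rightarrow> nat set set \<Rightarrow> nat \<Rightarrow> nat \<Rightarrow> nat \<Rightarrow> bool" where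
  "is_triangle_of N T x y z \<longleftrightarrow> x < N \<and> y < N \<and> z < N \<and> x \<noteq> y \<and> y \<noteq> z \<and> x \<noteq> z \<and>
     (\<forall>s\<in>{{x, y}, {y, z}, {x, z}}. is_edge N s \<or> s \<in> T)"

text \<open>Underlying graph of the quiver Q_T: vertices I = T, an edge between i and j
  iff they are distinct and bound a common triangle of T.\<close>
definition quiver_adj :: "nat \<Rightarrow> nat set set \<Rightarrow> nat set \<Rightarrow> nat set \<Rightarrow> bool" where
  "quiver_adj N T i j \<longleftrightarrow> i \<in> T \<and> j \<in> T \<and> i \<noteq> j \<and>
     (\<exists>x y z. is_triangle_of N T x y z \<and> i \<in> {{x, y}, {y, z}, {x, z}} \<and> j \<in> {{x, y}, {y, z}, {x, z}})"

text \<open>A set S of vertices is connected in the graph: any two elements are joined by a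
  path staying in S (the empty set counts as connected).\<close>
definition connected_in :: "('v \<Rightarrow> 'v \<Rightarrow> bool) \<Rightarrow> 'v set \<Rightarrow> bool" where
  "connected_in adj S \<longleftrightarrow> (\<forall>x\<in>S. \<forall>y\<in>S. (\<lambda>u v. u \<in> S \<and> v \<in> S \<and> adj u v)\<^sup>*\<^sup>* x y)"

end

(* Let i and j be distinct diagonals of T, both crossing alpha and alpha'. Take the triangle
   a b x of T on the side of i = {a, b} containing j. Since j crosses no side of this triangle,
   it lies behind one of the sides {a, x}, {x, b}, say {a, x}, and then every diagonal crossing
   both i and j crosses {a, x} as well. In particular {a, x} crosses alpha, so it is not a polygon
   edge: it is a diagonal of T adjacent to i in Q_T, crossing alpha and alpha', and strictly
   closer to j, measured by the number of vertices on its side facing j. Induction on this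
   number connects i to j inside Supp alpha \<inter> Supp alpha'. *)

theory Submission
  imports Defs
begin

section \<open>Chords of the polygon\<close>

definition between :: "nat \<Rightarrow> nat \<Rightarrow> nat \<Rightarrow> bool" where
  "between a b v \<longleftrightarrow> a < v \<and> v < b \<or> b < v \<and> v < a"

definition separates :: "nat \<Rightarrow> nat \<Rightarrow> nat \<Rightarrow> nat \<Rightarrow> bool" where
  "separates a b v w \<longleftrightarrow> v \<notin> {a, b} \<and> w \<notin> {a, b} \<and> between a b v \<noteq> between a b w"

lemma between_commute: "between b a v = between a b v"
  unfolding between_def by auto

lemma not_between_self [simp]: "\<not> between a a v"
  unfolding between_def by auto

lemma separates_commute: "separates b a v w = separates a b v w"
  unfolding separates_def by (auto simp: between_commute)

lemma separates_sym: "separates a b w v = separates a b v w"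
  unfolding separates_def by auto

lemma not_separates_degenerate [simp]: "\<not> separates a a v w"
  unfolding separates_def by simp

lemma separates_doubleton_cong:
  "{a, b} = {a', b'} \<Longrightarrow> {c, d} = {c', d'} \<Longrightarrow> separates a b c d = separates a' b' c' d'"
  unfolding doubleton_eq_iff by (elim disjE conjE) (simp_all add: separates_commute separates_sym)

lemma crosses_iff_separates: "crosses {a, b} {c, d} \<longleftrightarrow> separates a b c d"
proof
  assume "crosses {a, b} {c, d}"
  then obtain a' b' c' d' where ab: "{a, b} = {a', b'}" and cd: "{c, d} = {c', d'}"
    and "a' < c'" "c' < b'" "d' < a' \<or> b' < d'"
    unfolding crosses_def by blast
  then have "separates a' b' c' d'"
    unfolding separates_def between_def by auto
  then show "separates a b c d"
    using separates_doubleton_cong[OF ab cd] by simp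
next
  have witness: "crosses {a, b} {c, d}" if "a < c" "c < b" "d \<notin> {a, b}" "\<not> between a b d"
    for a b c d :: nat
    unfolding crosses_def using that
    by (intro exI[of _ a] exI[of _ b] exI[of _ c] exI[of _ d]) (auto simp: between_def)
  assume "separates a b c d"
  then show "crosses {a, b} {c, d}"
    using witness[of a c b d] witness[of b c a d] witness[of a d b c] witness[of b d a c]
    by (auto simp: separates_def between_def insert_commute)
qed

lemma not_separates_edge:
  assumes "is_edge N {u, v}" "p < N" "q < N"
  shows "\<not> separates u v p q"
proof -
  obtain a b where ab: "{u, v} = {a, b}" "a < b" "b < N" "b = a + 1 \<or> (a = 0 \<and> b = N - 1)"
    using assms(1) unfolding is_edge_def by blast
  have "\<not> separates a b p q"
    using ab(2-4) assms(2,3) unfolding separates_def between_def by auto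
  then show ?thesis
    using separates_doubleton_cong[OF ab(1) refl] by simp
qed

section \<open>Rotating the labels\<close>

text \<open>Separation depends only on the cyclic order of the vertices, so it is invariant under
  rotating the labels (\<open>separates_rotate_label\<close>). Facts about a few vertices are proved
  below by first rotating one of them to label \<open>0\<close>, where separation by a chord becomes a
  condition on the linear order.\<close>

definition rotate_label :: "nat \<Rightarrow> nat \<Rightarrow> nat \<Rightarrow> nat" where
  "rotate_label N k v = (if k \<le> v then v - k else v + N - k)"

lemma rotate_label_self: "rotate_label N k k = 0"
  unfolding rotate_label_def by simp

lemma rotate_label_eq_iff:
  "k < N \<Longrightarrow> v < N \<Longrightarrow> w < N \<Longrightarrow> rotate_label N k v = rotate_label N k w \<longleftrightarrow> v = w"
  unfolding rotate_label_def by auto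

lemma rotate_label_less_iff:
  "k < N \<Longrightarrow> v < N \<Longrightarrow> w < N \<Longrightarrow> rotate_label N k v < rotate_label N k w \<longleftrightarrow>
    (k \<le> v \<longleftrightarrow> k \<le> w) \<and> v < w \<or> k \<le> v \<and> w < k"
  unfolding rotate_label_def by auto

lemma between_rotate_label:
  assumes "k < N" "y < N" "z < N" "v < N" "k \<notin> {y, z}" "v \<notin> {y, z}"
  shows "between (rotate_label N k y) (rotate_label N k z) (rotate_label N k v) \<longleftrightarrow>
    between y z v \<noteq> between y z k"
proof -
  have "between (rotate_label N k y) (rotate_label N k z) (rotate_label N k v) \<longleftrightarrow>
      between y z v \<noteq> between y z k"
    if "y < z" "z < N" "y \<noteq> k" "z \<noteq> k" "v \<noteq> y" "v \<noteq> z" for y z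
    using that assms(1,4) unfolding between_def
    by (cases "k < y"; cases "z < k"; cases "k \<le> v"; simp add: rotate_label_less_iff; linarith)
  from this[of y z] this[of z y] show ?thesis
    using assms by (cases y z rule: linorder_cases) (auto simp: between_commute)
qed

lemma between_rotate_label_endpoint:
  assumes "k < N" "z < N" "v < N" "z \<noteq> k" "v \<notin> {k, z}"
  shows "between k z v \<longleftrightarrow> (rotate_label N k v < rotate_label N k z \<longleftrightarrow> k < z)"
  using assms unfolding between_def insert_iff
  by (cases "k < z"; cases "k < v"; cases "v < z"; simp add: rotate_label_less_iff)

lemma separates_rotate_label_endpoint:
  assumes "k < N" "z < N" "v < N" "w < N"
  shows "separates (rotate_label N k k) (rotate_label N k z) (rotate_label N k v) (rotate_label N k w)
    \<longleftrightarrow> separates k z v w"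
proof (cases "z = k")
  case True
  then show ?thesis unfolding separates_def by simp
next
  case False
  let ?r = "rotate_label N k"
  have side: "between 0 (?r z) (?r u) \<longleftrightarrow> (between k z u \<longleftrightarrow> k < z)" if "u < N" "u \<notin> {k, z}" for u
    using that assms False between_rotate_label_endpoint[of k N z u] rotate_label_eq_iff[of k N u k]
      rotate_label_self[of N k]
    unfolding between_def by auto
  have "?r v \<notin> {0, ?r z} \<longleftrightarrow> v \<notin> {k, z}" "?r w \<notin> {0, ?r z} \<longleftrightarrow> w \<notin> {k, z}"
    using assms rotate_label_eq_iff[of k N] rotate_label_self[of N k] by (metis insert_iff singletonD)+
  then show ?thesis
    using side[of v] side[of w] assms unfolding separates_def rotate_label_self by auto
qed

lemma separates_rotate_label:
  assumes "k < N" "y < N" "z < N" "v < N" "w < N"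
  shows "separates (rotate_label N k y) (rotate_label N k z) (rotate_label N k v) (rotate_label N k w)
    \<longleftrightarrow> separates y z v w"
proof (cases "k \<in> {y, z}")
  case True
  then show ?thesis
    using separates_rotate_label_endpoint[of k N z v w] separates_rotate_label_endpoint[of k N y v w] assms
    by (auto simp: separates_commute)
next
  case False
  then show ?thesis
    using assms between_rotate_label[of k N y z v] between_rotate_label[of k N y z w]
    unfolding separates_def by (auto simp: rotate_label_eq_iff)
qed

section \<open>Chords and triangles\<close>

lemma separates_swap:
  assumes "a < N" "b < N" "c < N" "d < N"
  shows "separates c d a b \<longleftrightarrow> separates a b c d"
proof -
  have "separates c d a b \<longleftrightarrow> separates a b c d" if "a = 0" for a b c d :: nat
    using that unfolding separates_def between_def by auto
  from this[where a = "rotate_label N a a" and b = "rotate_label N a b" and c = "rotate_label N a c"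
      and d = "rotate_label N a d", OF rotate_label_self]
  show ?thesis using assms by (simp add: separates_rotate_label)
qed

lemma triangle_arcs_cover:
  assumes "a < N" "b < N" "c < N" "v < N" "distinct [a, b, c, v]"
  shows "separates a b v c \<or> separates b c v a \<or> separates c a v b"
proof -
  have "separates a b v c \<or> separates b c v a \<or> separates c a v b"
    if "c = 0" "distinct [a, b, c, v]" for a b c v :: nat
    using that unfolding separates_def between_def by auto
  from this[where a = "rotate_label N c a" and b = "rotate_label N c b" and c = "rotate_label N c c"
      and v = "rotate_label N c v", OF rotate_label_self]
  show ?thesis using assms by (simp add: separates_rotate_label rotate_label_eq_iff)
qed

lemma triangle_arcs_disjoint:
  assumes "a < N" "b < N" "c < N" "v < N" "separates a b v c"
  shows "\<not> separates b c v a"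
proof -
  have "\<not> separates b c v a" if "c = 0" "separates a b v c" for a b c v :: nat
    using that unfolding separates_def between_def by auto
  from this[where a = "rotate_label N c a" and b = "rotate_label N c b" and c = "rotate_label N c c"
      and v = "rotate_label N c v", OF rotate_label_self]
  show ?thesis using assms by (simp add: separates_rotate_label)
qed

lemma separates_nested:
  assumes "a < N" "b < N" "x < N" "p < N" "v < N" "separates x b p a" "separates p b v a"
  shows "separates x b v a"
proof -
  have "separates x b v a" if "a = 0" "separates x b p a" "separates p b v a" for a b x p v :: nat
    using that unfolding separates_def between_def by auto
  from this[where a = "rotate_label N a a" and b = "rotate_label N a b" and x = "rotate_label N a x"
      and p = "rotate_label N a p" and v = "rotate_label N a v", OF rotate_label_self]
  show ?thesis using assms by (simp add: separates_rotate_label)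
qed

lemma chord_crossing_triangle_side:
  assumes "a < N" "b < N" "x < N" "p < N" "q < N" "separates x b p a" "separates x b p q"
  shows "q = a \<or> separates a b p q \<or> separates a x p q"
proof (rule ccontr)
  assume "\<not> ?thesis"
  then have "q \<noteq> a" "\<not> separates a b p q" "\<not> separates a x p q" by auto
  have "\<not> separates a b p x"
    using triangle_arcs_disjoint[of x N b a p] assms by (simp add: separates_commute)
  have "\<not> separates x a p b"
    using triangle_arcs_disjoint[of b N x a p] assms by (simp add: separates_commute)
  have "distinct [a, b, x, q]" "p \<notin> {a, b, x}"
    using assms(6,7) \<open>q \<noteq> a\<close> unfolding separates_def by auto
  have "\<not> separates a b q x"
    using \<open>\<not> separates a b p q\<close> \<open>\<not> separates a b p x\<close> \<open>distinct [a, b, x, q]\<close> \<open>p \<notin> {a, b, x}\<close>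
    unfolding separates_def by auto
  moreover have "\<not> separates b x q a"
    using assms(6,7) unfolding separates_def by (auto simp: between_commute)
  ultimately have "separates x a q b"
    using triangle_arcs_cover[of a N b x q] assms \<open>distinct [a, b, x, q]\<close> by blast
  then have "separates a x p q"
    using \<open>\<not> separates x a p b\<close> \<open>p \<notin> {a, b, x}\<close> unfolding separates_def by (auto simp: between_commute)
  with \<open>\<not> separates a x p q\<close> show False by contradiction
qed

definition behind :: "nat \<Rightarrow> nat \<Rightarrow> nat \<Rightarrow> nat \<Rightarrow> bool" where
  "behind a x b v \<longleftrightarrow> v \<in> {a, x} \<or> separates a x v b"

lemma separates_behind:
  assumes "a < N" "x < N" "b < N" "c < N" "d < N" "v < N" "b \<notin> {a, x}"
    and "behind a x b c" "behind a x b d" "\<not> separates a x v b"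
  shows "\<not> separates c d v b"
proof -
  have zero: "\<not> separates c d v b"
    if "b = 0" "b \<notin> {a, x}" "behind a x b c" "behind a x b d" "\<not> separates a x v b" "a < x"
    for a x b c d v :: nat
  proof -
    have "a \<le> c" "c \<le> x" "a \<le> d" "d \<le> x" "v \<le> a \<or> x \<le> v"
      using that unfolding behind_def separates_def between_def by auto
    then have "\<not> between c d v"
      unfolding between_def by auto
    moreover have "\<not> between c d b"
      using \<open>b = 0\<close> unfolding between_def by simp
    ultimately show ?thesis
      unfolding separates_def by simp
  qed
  have "\<not> separates c d v b"
    if "b = 0" "b \<notin> {a, x}" "behind a x b c" "behind a x b d" "\<not> separates a x v b"
    for a x b c d v :: nat
    using that zero[of b a x c d v] zero[of b x a c d v]
    by (cases a x rule: linorder_cases) (auto simp: behind_def separates_commute)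
  from this[where a = "rotate_label N b a" and x = "rotate_label N b x" and b = "rotate_label N b b"
      and c = "rotate_label N b c" and d = "rotate_label N b d" and v = "rotate_label N b v",
      OF rotate_label_self]
  show ?thesis using assms by (simp add: behind_def separates_rotate_label rotate_label_eq_iff)
qed

lemma behind_cases:
  assumes "a < N" "b < N" "x < N" "c < N" "d < N" "distinct [a, b, x]" "c \<notin> {a, b}"
    and "\<not> separates a b c x" "\<not> separates a b c d" "\<not> separates a x c d" "\<not> separates x b c d"
  shows "behind a x b c \<and> behind a x b d \<or> behind b x a c \<and> behind b x a d"
proof -
  have beyond_ax: "behind a x b c \<and> behind a x b d" if "separates a x c b"
    using that assms(10) unfolding behind_def separates_def by auto
  have beyond_xb: "behind b x a c \<and> behind b x a d" if "separates b x c a"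
    using that assms(11) unfolding behind_def separates_def by (auto simp: between_commute)
  have apex: "behind a x b c \<and> behind a x b d \<or> behind b x a c \<and> behind b x a d" if "c = x"
  proof (cases "d \<in> {a, b, x}")
    case True
    then show ?thesis using that unfolding behind_def by auto
  next
    case False
    then have "\<not> separates a b d x"
      using that assms(9) by (simp add: separates_sym)
    then have "separates b x d a \<or> separates x a d b"
      using triangle_arcs_cover[of a N b x d] assms False by auto
    then show ?thesis
      using that unfolding behind_def by (auto simp: separates_commute)
  qed
  have "c = x \<or> separates b x c a \<or> separates x a c b"
    using triangle_arcs_cover[of a N b x c] assms by auto
  then show ?thesis
    using beyond_ax beyond_xb apex by (auto simp: separates_commute)
qed

lemma separates_behind_cross:
  assumes "a < N" "b < N" "x < N" "c < N" "d < N" "p < N" "q < N" "distinct [a, b, x]"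
    and "behind a x b c" "behind a x b d" "separates a b p q" "separates c d p q"
  shows "separates a x p q"
proof -
  have "b \<notin> {a, x}"
    using assms(8) by auto
  then have "b \<notin> {c, d}"
    using assms(9,10) unfolding behind_def separates_def by auto
  have core: "separates a x p q"
    if "p < N" "q < N" "separates a b p q" "separates c d p q" "separates a b q x" for p q
  proof -
    have "\<not> separates a x q b"
      using triangle_arcs_disjoint[of b N a x q] that assms(1-3) by (simp add: separates_commute)
    then have "\<not> separates c d q b"
      using separates_behind[of a N x b c d q] that assms \<open>b \<notin> {a, x}\<close> by blast
    then have "separates c d p b"
      using that(4) \<open>b \<notin> {c, d}\<close> unfolding separates_def by auto
    then have "separates a x p b"
      using separates_behind[of a N x b c d p] that assms \<open>b \<notin> {a, x}\<close> by blast
    with \<open>\<not> separates a x q b\<close> show ?thesis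
      using that(3,5) unfolding separates_def by auto
  qed
  have "separates a b q x \<or> separates a b p x"
    using assms(8,11) unfolding separates_def by auto
  then show ?thesis
    using core[of p q] core[of q p] assms by (auto simp: separates_sym)
qed

section \<open>Diagonals and triangulations\<close>

lemma diagonalE:
  assumes "is_diagonal N d"
  obtains a b where "d = {a, b}" "a + 2 \<le> b" "b < N" "\<not> (a = 0 \<and> b = N - 1)"
  using assms unfolding is_diagonal_def by blast

lemma diagonal_vertices:
  assumes "is_diagonal N d"
  obtains a b where "d = {a, b}" "a \<noteq> b" "a < N" "b < N"
proof -
  obtain a b where "d = {a, b}" "a + 2 \<le> b" "b < N"
    using assms by (rule diagonalE)
  then show thesis
    using that[of a b] by simp
qed

lemma diagonal_doubleton: "is_diagonal N {a, b} \<Longrightarrow> a \<noteq> b \<and> a < N \<and> b < N"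
  by (erule diagonal_vertices) (auto simp: doubleton_eq_iff)

lemma diagonal_endpoint_outside:
  assumes "is_diagonal N j" "j \<noteq> {a, b}"
  obtains c d where "j = {c, d}" "c \<notin> {a, b}" "c < N" "d < N"
proof -
  obtain c d where cd: "j = {c, d}" "c \<noteq> d" "c < N" "d < N"
    using assms(1) by (rule diagonal_vertices)
  show thesis
  proof (cases "c \<in> {a, b}")
    case True
    then have "d \<notin> {a, b}"
      using assms(2) cd(1,2) by auto
    then show thesis
      using that[of d c] cd by (simp add: insert_commute)
  next
    case False
    then show thesis
      using that cd by blast
  qed
qed

lemma not_edge_diagonal:
  assumes "u \<noteq> v" "u < N" "v < N" "\<not> is_edge N {u, v}"
  shows "is_diagonal N {u, v}"
proof -
  have "is_diagonal N {u, v}" if "u < v" "v < N" "\<not> is_edge N {u, v}" for u v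
  proof -
    have "v \<noteq> u + 1" "\<not> (u = 0 \<and> v = N - 1)"
      using that unfolding is_edge_def by blast+
    then show ?thesis
      unfolding is_diagonal_def using that by (intro exI[of _ u] exI[of _ v]) auto
  qed
  from this[of u v] this[of v u] show ?thesis
    using assms by (cases u v rule: linorder_cases) (auto simp: insert_commute)
qed

lemma separates_polygon_neighbours:
  assumes "is_diagonal N {a, b}"
  obtains y z where "y < N" "z < N" "is_edge N {a, y}" "is_edge N {a, z}" "separates a b y z"
proof -
  obtain a' b' where d: "{a, b} = {a', b'}" "a' + 2 \<le> b'" "b' < N" "\<not> (a' = 0 \<and> b' = N - 1)"
    using assms by (rule diagonalE)
  have ab: "a = a' \<and> b = b' \<or> a = b' \<and> b = a'"
    using d(1) by (auto simp: doubleton_eq_iff)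
  define y where "y = (if Suc a < N then Suc a else 0)"
  define z where "z = (if 0 < a then a - 1 else N - 1)"
  have bounds: "y < N" "z < N"
    using ab d unfolding y_def z_def by auto
  have step: "is_edge N {u, Suc u}" if "Suc u < N" for u
    unfolding is_edge_def using that by auto
  have wrap: "is_edge N {0, N - 1}"
    unfolding is_edge_def using d(2,3) by (intro exI[of _ 0] exI[of _ "N - 1"]) auto
  have "is_edge N {a, y}"
  proof (cases "Suc a < N")
    case True
    then show ?thesis using step[of a] unfolding y_def by simp
  next
    case False
    then have "a = N - 1" using ab d by auto
    then show ?thesis using wrap False unfolding y_def by (simp add: insert_commute)
  qed
  moreover have "is_edge N {a, z}"
  proof (cases "0 < a")
    case True
    then show ?thesis using step[of "a - 1"] ab d unfolding z_def by (auto simp: insert_commute)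
  next
    case False
    then show ?thesis using wrap unfolding z_def by simp
  qed
  moreover have "separates a b y z"
  proof -
    consider "a + 2 \<le> b" "b < N" "\<not> (a = 0 \<and> b = N - 1)" | "b + 2 \<le> a" "a < N" "\<not> (b = 0 \<and> a = N - 1)"
      using ab d by auto
    then show ?thesis
    proof cases
      case 1
      then show ?thesis
        unfolding separates_def between_def y_def z_def by (cases "a = 0") auto
    next
      case 2
      then show ?thesis
        unfolding separates_def between_def y_def z_def by (cases "Suc a = N") auto
    qed
  qed
  ultimately show thesis
    using that bounds by blast
qed

lemma polygon_neighbour_towards:
  assumes "is_diagonal N {a, b}" "w < N" "w \<notin> {a, b}"
  obtains y where "y < N" "y \<notin> {a, b}" "is_edge N {a, y}" "\<not> separates a b y w"
proof -
  obtain y z where yz: "y < N" "z < N" "is_edge N {a, y}" "is_edge N {a, z}" "separates a b y z"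
    using assms(1) by (rule separates_polygon_neighbours)
  then have "y \<notin> {a, b}" "z \<notin> {a, b}" "\<not> separates a b y w \<or> \<not> separates a b z w"
    using assms(3) unfolding separates_def by auto
  then show thesis
    using that yz by blast
qed

lemma triangulation_diagonal: "is_triangulation N T \<Longrightarrow> d \<in> T \<Longrightarrow> is_diagonal N d"
  unfolding is_triangulation_def by blast

lemma triangulation_not_crosses: "is_triangulation N T \<Longrightarrow> d \<in> T \<Longrightarrow> e \<in> T \<Longrightarrow> \<not> crosses d e"
  unfolding is_triangulation_def by blast

lemma triangulation_maximal:
  "is_triangulation N T \<Longrightarrow> is_diagonal N e \<Longrightarrow> e \<notin> T \<Longrightarrow> \<exists>d\<in>T. crosses d e"
  unfolding is_triangulation_def by blast

lemma triangulation_side_not_separates: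
  assumes "is_triangulation N T" "is_edge N {u, v} \<or> {u, v} \<in> T" "{p, q} \<in> T"
  shows "\<not> separates u v p q"
  using assms(2)
proof
  assume "is_edge N {u, v}"
  moreover have "p < N" "q < N"
    using diagonal_doubleton triangulation_diagonal assms(1,3) by blast+
  ultimately show ?thesis
    by (rule not_separates_edge)
next
  assume "{u, v} \<in> T"
  then show ?thesis
    using triangulation_not_crosses[OF assms(1) _ assms(3)] crosses_iff_separates by blast
qed

lemma missing_side_closer_neighbour:
  assumes tri: "is_triangulation N T" and ab: "{a, b} \<in> T" and x: "x < N" "x \<notin> {a, b}"
    and ax: "is_edge N {a, x} \<or> {a, x} \<in> T" and xb: "\<not> (is_edge N {x, b} \<or> {x, b} \<in> T)"
  obtains p where "p < N" "{a, p} \<in> T" "separates x b p a"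
proof -
  have "a < N" "b < N" "a \<noteq> b"
    using diagonal_doubleton triangulation_diagonal tri ab by blast+
  then have "is_diagonal N {x, b}"
    using not_edge_diagonal[of x b N] x xb by auto
  then obtain dd where "dd \<in> T" "crosses dd {x, b}"
    using triangulation_maximal[OF tri] xb by blast
  then obtain p0 q0 where dd: "dd = {p0, q0}" "p0 \<noteq> q0" "p0 < N" "q0 < N"
    using triangulation_diagonal[OF tri] diagonal_vertices by blast
  then have "separates p0 q0 x b"
    using \<open>crosses dd {x, b}\<close> crosses_iff_separates by simp
  then have sep: "separates x b p0 q0"
    using separates_swap[of x N b p0 q0] \<open>b < N\<close> x(1) dd(3,4) by simp
  moreover have "a \<notin> {x, b}"
    using x(2) \<open>a \<noteq> b\<close> by auto
  ultimately have "separates x b p0 a \<or> separates x b q0 a"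
    unfolding separates_def by auto
  then obtain p q where pq: "dd = {p, q}" "p < N" "q < N" "separates x b p q" "separates x b p a"
  proof
    assume "separates x b p0 a"
    with dd sep show thesis by (intro that[of p0 q0]) auto
  next
    assume "separates x b q0 a"
    with dd sep show thesis by (intro that[of q0 p0]) (auto simp: separates_sym)
  qed
  have "q = a \<or> separates a b p q \<or> separates a x p q"
    using chord_crossing_triangle_side[of a N b x p q] \<open>a < N\<close> \<open>b < N\<close> x pq by blast
  moreover have "\<not> separates a b p q" "\<not> separates a x p q"
    using triangulation_side_not_separates[OF tri] ab ax \<open>dd \<in> T\<close> pq(1) by blast+
  ultimately have "{a, p} \<in> T"
    using \<open>dd \<in> T\<close> pq(1) by (auto simp: insert_commute)
  then show ?thesis
    using that pq(2,5) by blast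
qed

lemma triangle_towards:
  assumes tri: "is_triangulation N T" and ab: "{a, b} \<in> T" and w: "w < N" "w \<notin> {a, b}"
  obtains x where "x < N" "x \<notin> {a, b}" "\<not> separates a b x w" "is_triangle_of N T a b x"
proof -
  have diag: "is_diagonal N {a, b}"
    using tri ab by (rule triangulation_diagonal)
  then have "a < N" "b < N" "a \<noteq> b"
    using diagonal_doubleton by blast+
  define C where "C = {y. y < N \<and> y \<notin> {a, b} \<and> \<not> separates a b y w \<and> (is_edge N {a, y} \<or> {a, y} \<in> T)}"
  define beyond where "beyond y = {v. v < N \<and> separates y b v a}" for y
  obtain y0 where "y0 \<in> C"
    using polygon_neighbour_towards[OF diag w] unfolding C_def by blast
  \<comment> \<open>\<open>x\<close> is the neighbour of \<open>a\<close> on the side of \<open>w\<close> closest to \<open>b\<close>, i.e. with the fewest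
    vertices beyond the chord \<open>{x, b}\<close>.\<close>
  then obtain x where "x \<in> C" and x_min: "\<And>y. y \<in> C \<Longrightarrow> card (beyond x) \<le> card (beyond y)"
    using ex_has_least_nat[of "\<lambda>y. y \<in> C" y0 "\<lambda>y. card (beyond y)"] by blast
  then have x: "x < N" "x \<notin> {a, b}" "\<not> separates a b x w" and ax: "is_edge N {a, x} \<or> {a, x} \<in> T"
    unfolding C_def by auto
  have xb: "is_edge N {x, b} \<or> {x, b} \<in> T"
  proof (rule ccontr)
    assume "\<not> (is_edge N {x, b} \<or> {x, b} \<in> T)"
    then obtain p where p: "p < N" "{a, p} \<in> T" "separates x b p a"
      using missing_side_closer_neighbour[OF tri ab x(1,2) ax] by blast
    have "\<not> separates a b p x"
      using triangle_arcs_disjoint[of x N b a p] p x \<open>a < N\<close> \<open>b < N\<close> by (simp add: separates_commute)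
    then have "p \<in> C"
      using p x(2,3) w(2) unfolding C_def separates_def by auto
    have "beyond p \<subseteq> beyond x"
      using separates_nested[of a N b x p] p x \<open>a < N\<close> \<open>b < N\<close> unfolding beyond_def by blast
    moreover have "p \<in> beyond x" "p \<notin> beyond p"
      using p unfolding beyond_def separates_def by auto
    ultimately have "card (beyond p) < card (beyond x)"
      by (intro psubset_card_mono) (auto simp: beyond_def)
    with x_min[OF \<open>p \<in> C\<close>] show False
      by simp
  qed
  have "is_triangle_of N T a b x"
    unfolding is_triangle_of_def using x ax xb ab \<open>a < N\<close> \<open>b < N\<close> \<open>a \<noteq> b\<close>
    by (auto simp: insert_commute)
  then show ?thesis
    using that x by blast
qed

lemma is_triangle_of_commute: "is_triangle_of N T a b x \<Longrightarrow> is_triangle_of N T b a x"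
  unfolding is_triangle_of_def by (auto simp: insert_commute)

section \<open>Walking towards a diagonal\<close>

text \<open>The vertices on the side of \<open>i\<close> that contains \<open>j\<close>.\<close>

definition facing_side :: "nat \<Rightarrow> nat set \<Rightarrow> nat set \<Rightarrow> nat set" where
  "facing_side N i j = {v. v < N \<and> v \<notin> i \<and> (\<forall>w\<in>j. \<not> crosses i {v, w})}"

lemma facing_side_eq:
  assumes "c \<notin> {a, b}" "\<not> separates a b c d"
  shows "facing_side N {a, b} {c, d} = {v. v < N \<and> v \<notin> {a, b} \<and> \<not> separates a b v c}"
  using assms unfolding facing_side_def crosses_iff_separates by (auto simp: separates_def)

lemma card_facing_side_less:
  assumes "a < N" "b < N" "x < N" "distinct [a, b, x]" "c \<noteq> d" "c \<notin> {a, b}"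
    and "\<not> separates a b c x" "\<not> separates a b c d" "behind a x b c" "behind a x b d" "{c, d} \<noteq> {a, x}"
  shows "card (facing_side N {a, x} {c, d}) < card (facing_side N {a, b} {c, d})"
proof -
  obtain w w' where ww': "{c, d} = {w, w'}" "w \<notin> {a, x}" "behind a x b w" "behind a x b w'"
    using assms(5,9-11) by blast
  then have "separates a x w b" "\<not> separates a x w w'"
    unfolding behind_def separates_def by auto
  then have "facing_side N {a, x} {c, d} = {v. v < N \<and> v \<notin> {a, x} \<and> \<not> separates a x v w}"
    using facing_side_eq[of w a x w' N] ww'(1,2) by simp
  also have "\<dots> = {v. v < N \<and> separates a x v b}"
    using \<open>separates a x w b\<close> unfolding separates_def by auto
  finally have ax: "facing_side N {a, x} {c, d} = {v. v < N \<and> separates a x v b}" .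
  have "\<not> separates a b v c \<longleftrightarrow> \<not> separates a b v x" if "v \<notin> {a, b}" for v
    using that assms(4,6,7) unfolding separates_def by auto
  then have ab: "facing_side N {a, b} {c, d} = {v. v < N \<and> v \<notin> {a, b} \<and> \<not> separates a b v x}"
    using facing_side_eq[of c a b d N] assms(6,8) by auto
  have "{v. v < N \<and> separates a x v b} \<subseteq> {v. v < N \<and> v \<notin> {a, b} \<and> \<not> separates a b v x}"
    using triangle_arcs_disjoint[of x N a b] assms(1-3) unfolding separates_def
    by (auto simp: between_commute)
  moreover have "x \<in> {v. v < N \<and> v \<notin> {a, b} \<and> \<not> separates a b v x}"
    using assms(3,4) unfolding separates_def by auto
  moreover have "x \<notin> {v. v < N \<and> separates a x v b}"
    unfolding separates_def by auto
  ultimately show ?thesis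
    unfolding ax ab by (intro psubset_card_mono) auto
qed

lemma adjacent_side_towards:
  assumes tri: "is_triangulation N T" and ab: "{a, b} \<in> T" and abx: "is_triangle_of N T a b x"
    and cd: "{c, d} \<in> T" "c \<notin> {a, b}" "\<not> separates a b c x"
    and behind: "behind a x b c" "behind a x b d"
    and \<beta>: "is_diagonal N \<beta>" "crosses {a, b} \<beta>" "crosses {c, d} \<beta>"
  shows "quiver_adj N T {a, b} {a, x}"
    and "\<And>\<gamma>. is_diagonal N \<gamma> \<Longrightarrow> crosses {a, b} \<gamma> \<Longrightarrow> crosses {c, d} \<gamma> \<Longrightarrow> crosses {a, x} \<gamma>"
    and "{a, x} = {c, d} \<or> card (facing_side N {a, x} {c, d}) < card (facing_side N {a, b} {c, d})"
proof -
  have abx': "a < N" "b < N" "x < N" "distinct [a, b, x]" "is_edge N {a, x} \<or> {a, x} \<in> T"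
    using abx unfolding is_triangle_of_def by auto
  have "c < N" "d < N" "c \<noteq> d"
    using diagonal_doubleton triangulation_diagonal tri cd(1) by blast+
  show crosses_ax: "crosses {a, x} \<gamma>"
    if \<gamma>: "is_diagonal N \<gamma>" "crosses {a, b} \<gamma>" "crosses {c, d} \<gamma>" for \<gamma>
  proof -
    obtain p q where "\<gamma> = {p, q}" "p \<noteq> q" "p < N" "q < N"
      using \<gamma>(1) by (rule diagonal_vertices)
    then show ?thesis
      using separates_behind_cross[of a N b x c d p q] \<gamma>(2,3) abx' behind \<open>c < N\<close> \<open>d < N\<close>
      by (simp add: crosses_iff_separates)
  qed
  have "{a, x} \<in> T"
  proof -
    obtain p q where "\<beta> = {p, q}" "p \<noteq> q" "p < N" "q < N"
      using \<beta>(1) by (rule diagonal_vertices)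
    moreover have "crosses {a, x} \<beta>"
      using crosses_ax \<beta> .
    ultimately show ?thesis
      using abx'(5) not_separates_edge[of N a x p q] by (auto simp: crosses_iff_separates)
  qed
  then show "quiver_adj N T {a, b} {a, x}"
    unfolding quiver_adj_def using ab abx abx'(4) by (auto simp: doubleton_eq_iff)
  have "\<not> separates a b c d"
    using triangulation_side_not_separates[OF tri _ cd(1)] ab by blast
  then show "{a, x} = {c, d} \<or> card (facing_side N {a, x} {c, d}) < card (facing_side N {a, b} {c, d})"
    using card_facing_side_less[of a N b x c d] abx' cd(2,3) behind \<open>c \<noteq> d\<close> by auto
qed

lemma exists_adjacent_towards:
  assumes tri: "is_triangulation N T" and "i \<in> T" "j \<in> T" "i \<noteq> j"
    and \<beta>: "is_diagonal N \<beta>" "crosses i \<beta>" "crosses j \<beta>"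
  obtains e where "quiver_adj N T i e"
    and "\<And>\<gamma>. is_diagonal N \<gamma> \<Longrightarrow> crosses i \<gamma> \<Longrightarrow> crosses j \<gamma> \<Longrightarrow> crosses e \<gamma>"
    and "e = j \<or> card (facing_side N e j) < card (facing_side N i j)"
proof -
  obtain a b where i: "i = {a, b}"
    using triangulation_diagonal[OF tri \<open>i \<in> T\<close>] by (rule diagonalE)
  obtain c d where j: "j = {c, d}" "c \<notin> {a, b}" "c < N" "d < N"
    using triangulation_diagonal[OF tri \<open>j \<in> T\<close>] \<open>i \<noteq> j\<close> i by (metis diagonal_endpoint_outside)
  obtain x where x: "x < N" "x \<notin> {a, b}" "\<not> separates a b x c" "is_triangle_of N T a b x"
    using triangle_towards[OF tri \<open>i \<in> T\<close>[unfolded i] j(3,2)] by blast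
  then have sides: "is_edge N {a, x} \<or> {a, x} \<in> T" "is_edge N {x, b} \<or> {x, b} \<in> T"
    and "a < N" "b < N" "distinct [a, b, x]"
    unfolding is_triangle_of_def by (auto simp: insert_commute)
  have "\<not> separates a b c d" "\<not> separates a x c d" "\<not> separates x b c d"
    using triangulation_side_not_separates[OF tri _ \<open>j \<in> T\<close>[unfolded j(1)]] \<open>i \<in> T\<close> i sides by blast+
  then have "behind a x b c \<and> behind a x b d \<or> behind b x a c \<and> behind b x a d"
    using behind_cases[of a N b x c d] \<open>a < N\<close> \<open>b < N\<close> x j \<open>distinct [a, b, x]\<close>
    by (simp add: separates_sym)
  then show thesis
  proof
    assume "behind a x b c \<and> behind a x b d"
    then show thesis
      using adjacent_side_towards[of N T a b x c d \<beta>] that[of "{a, x}"] tri \<open>i \<in> T\<close> \<open>j \<in> T\<close> i j x \<beta>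
      by (simp add: separates_sym)
  next
    assume "behind b x a c \<and> behind b x a d"
    moreover have "{b, a} = i" "is_triangle_of N T b a x" "\<not> separates b a c x"
      using i x is_triangle_of_commute by (auto simp: separates_commute separates_sym)
    ultimately show thesis
      using adjacent_side_towards[of N T b a x c d \<beta>] that[of "{b, x}"] tri \<open>i \<in> T\<close> \<open>j \<in> T\<close> j \<beta>
      by auto
  qed
qed

theorem connected_in_crossing_diagonals:
  assumes tri: "is_triangulation N T" and "\<beta> \<in> B" and diag: "\<forall>\<gamma>\<in>B. is_diagonal N \<gamma>"
  shows "connected_in (quiver_adj N T) {i \<in> T. \<forall>\<gamma>\<in>B. crosses i \<gamma>}"
proof -
  define S where "S = {i \<in> T. \<forall>\<gamma>\<in>B. crosses i \<gamma>}"
  define R where "R = (\<lambda>u v. u \<in> S \<and> v \<in> S \<and> quiver_adj N T u v)"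
  have "R\<^sup>*\<^sup>* i j" if "i \<in> S" "j \<in> S" for i j
    using that(1)
  proof (induction i rule: measure_induct_rule[where f = "\<lambda>i. card (facing_side N i j)"])
    case (less i)
    show ?case
    proof (cases "i = j")
      case False
      obtain e where e: "quiver_adj N T i e"
        "\<And>\<gamma>. is_diagonal N \<gamma> \<Longrightarrow> crosses i \<gamma> \<Longrightarrow> crosses j \<gamma> \<Longrightarrow> crosses e \<gamma>"
        "e = j \<or> card (facing_side N e j) < card (facing_side N i j)"
        using exists_adjacent_towards[OF tri _ _ False, of \<beta>] less.prems \<open>j \<in> S\<close> \<open>\<beta> \<in> B\<close> diag
        unfolding S_def by blast
      then have "e \<in> S"
        using less.prems \<open>j \<in> S\<close> diag unfolding S_def quiver_adj_def by blast
      with less.prems e(1) have "R i e"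
        unfolding R_def by blast
      with e(3) less.IH[of e] \<open>e \<in> S\<close> show ?thesis
        by (metis converse_rtranclp_into_rtranclp rtranclp.rtrancl_refl)
    qed simp
  qed
  then show ?thesis
    unfolding connected_in_def R_def S_def by blast
qed

theorem mainTheorem11:
  fixes n :: nat and T :: "nat set set" and \<alpha> \<alpha>' :: "nat set"
  assumes "is_triangulation (n + 3) T"
    and "positive_root (n + 3) T \<alpha>"
    and "positive_root (n + 3) T \<alpha>'"
  shows "connected_in (quiver_adj (n + 3) T) (Supp T \<alpha> \<inter> Supp T \<alpha>')"
proof -
  have "\<forall>\<gamma>\<in>{\<alpha>, \<alpha>'}. is_diagonal (n + 3) \<gamma>"
    using assms(2,3) unfolding positive_root_def by auto
  then have "connected_in (quiver_adj (n + 3) T) {i \<in> T. \<forall>\<gamma>\<in>{\<alpha>, \<alpha>'}. crosses i \<gamma>}"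
    by (rule connected_in_crossing_diagonals[OF assms(1) insertI1])
  moreover have "{i \<in> T. \<forall>\<gamma>\<in>{\<alpha>, \<alpha>'}. crosses i \<gamma>} = Supp T \<alpha> \<inter> Supp T \<alpha>'"
    unfolding Supp_def by auto
  ultimately show ?thesis
    by simp
qed

end
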